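(* Let $t\ge0$, let $b_0,\dots,b_t\ge0$ be integers, let $M=\{0^{(b_0)},1^{(b_1)},\dots,t^{(b_t)}\}$ be the multiset containing $b_i$ copies of $i$, and let $0\le k\le t$. Then the number of $k$-vn-arrangements of $M$ is \[\binom{b_0+b_1+\cdots+b_k}{b_0,b_1,\dots,b_k}\prod_{i=1}^{t-k}\binom{b_i+b_{i+1}+\cdots+b_{i+k}}{b_{i+k}}.\]
   Context: Let $b=b_0+\cdots+b_t$. A $k$-vn-arrangement of $M$ is a sequence $(v_1,\dots,v_b)$ listing the elements of $M$ with their multiplicities such that $v_{i+1}-v_i\le k$ for all $1\le i<b$. The first factor is a multinomial coefficient, and an empty product equals $1$. *)

theory Defs
  imports Main "HOL-Library.Multiset"
begin

definition multinomial_coeff :: "nat set \<Rightarrow> (nat \<Rightarrow> nat) \<Rightarrow> nat" where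
  "multinomial_coeff I b = fact (\<Sum>i\<in>I. b i) div (\<Prod>i\<in>I. fact (b i))"

definition vn_multiset :: "nat \<Rightarrow> (nat \<Rightarrow> nat) \<Rightarrow> nat multiset" where
  "vn_multiset t b = (\<Sum>i\<in>{0..t}. replicate_mset (b i) i)"

definition vn_arrangements :: "nat \<Rightarrow> nat multiset \<Rightarrow> nat list set" where
  "vn_arrangements k M = {vs. mset vs = M \<and>
      (\<forall>i. Suc i < length vs \<longrightarrow> int (vs ! Suc i) - int (vs ! i) \<le> int k)}"

end

theory Submission
  imports Defs
begin

(* Remove the largest letter m.  Since m is the maximum, deleting all its copies from a
   k-vn-arrangement leaves a k-vn-arrangement of the rest (a step up into a block of m's and
   a step out of it merge into a single step of size at most k), and conversely the copies of m
   can be put back in blocks standing at the front or directly after a letter y with m <= y + k.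
   If s letters qualify, distributing b m copies over these s + 1 slots gives
   C(s + b m, b m) choices; here s = b (m-k) + ... + b (m-1).  The first k + 1 factors of the
   resulting product telescope to the multinomial coefficient. *)

(* Lists obtained from w by inserting n copies of a new letter m, each maximal block of m's
   standing at the front or directly after a letter satisfying P. *)
definition insertions :: "('a \<Rightarrow> bool) \<Rightarrow> 'a \<Rightarrow> 'a list \<Rightarrow> nat \<Rightarrow> 'a list set" where
  "insertions P m w n = {v. filter (\<lambda>y. y \<noteq> m) v = w \<and> count (mset v) m = n \<and>
      successively (\<lambda>a c. c = m \<longrightarrow> a = m \<or> P a) v}"

lemma insertions_Nil: "insertions P m [] n = {replicate n m}"
proof -
  have "v = replicate n m" if "filter (\<lambda>y. y \<noteq> m) v = []" "count (mset v) m = n" for v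
  proof -
    have "\<forall>y\<in>set v. y = m" using that(1) by (simp add: filter_empty_conv)
    then have "v = replicate (count (mset v) m) m" by (induction v) auto
    with that(2) show ?thesis by simp
  qed
  moreover have "successively (\<lambda>a c. c = m \<longrightarrow> a = m \<or> P a) (replicate n m)"
    by (simp add: successively_conv_nth)
  ultimately show ?thesis unfolding insertions_def by auto
qed

lemma finite_insertions: "finite (insertions P m w n)"
proof (rule finite_subset)
  show "insertions P m w n \<subseteq> {v. set v \<subseteq> insert m (set w) \<and> length v = length w + n}"
  proof
    fix v assume "v \<in> insertions P m w n"
    moreover have "length v = length (filter (\<lambda>y. y \<noteq> m) v) + count (mset v) m"
      by (induction v) auto
    ultimately show "v \<in> {v. set v \<subseteq> insert m (set w) \<and> length v = length w + n}"
      unfolding insertions_def by auto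
  qed
  show "finite {v. set v \<subseteq> insert m (set w) \<and> length v = length w + n}"
    by (rule finite_lists_length_eq) simp
qed

lemma insertions_snoc_last_neq:
  assumes "x \<noteq> m"
  shows "{v \<in> insertions P m (w @ [x]) n. last v \<noteq> m} = (\<lambda>u. u @ [x]) ` insertions P m w n"
proof (intro equalityI subsetI)
  fix v assume v: "v \<in> {v \<in> insertions P m (w @ [x]) n. last v \<noteq> m}"
  then have "v \<noteq> []" by (auto simp: insertions_def)
  then obtain u y where "v = u @ [y]" by (metis rev_exhaust)
  with v show "v \<in> (\<lambda>u. u @ [x]) ` insertions P m w n"
    by (auto simp: insertions_def successively_append_iff)
next
  fix v assume "v \<in> (\<lambda>u. u @ [x]) ` insertions P m w n"
  with assms show "v \<in> {v \<in> insertions P m (w @ [x]) n. last v \<noteq> m}"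
    by (auto simp: insertions_def successively_append_iff)
qed

lemma insertions_snoc_last_eq:
  assumes "x \<noteq> m"
  shows "{v \<in> insertions P m (w @ [x]) (Suc n). last v = m} =
    (\<lambda>u. u @ [m]) ` {u \<in> insertions P m (w @ [x]) n. last u = m \<or> P x}"
proof -
  have last_eq: "last u = x" if u: "filter (\<lambda>y. y \<noteq> m) u = w @ [x]" "last u \<noteq> m" for u
  proof -
    obtain u' y where "u = u' @ [y]"
      by (cases u rule: rev_cases) (use u(1) in auto)
    with u show ?thesis by auto
  qed
  show ?thesis
  proof (intro equalityI subsetI)
    fix v assume "v \<in> {v \<in> insertions P m (w @ [x]) (Suc n). last v = m}"
    then have v: "filter (\<lambda>y. y \<noteq> m) v = w @ [x]" "count (mset v) m = Suc n"
      "successively (\<lambda>a c. c = m \<longrightarrow> a = m \<or> P a) v" "last v = m"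
      by (auto simp: insertions_def)
    obtain u where u: "v = u @ [m]"
      by (cases v rule: rev_cases) (use v(2,4) in auto)
    have "u \<noteq> []" using v(1) u assms by auto
    with v u last_eq[of u] show "v \<in> (\<lambda>u. u @ [m]) ` {u \<in> insertions P m (w @ [x]) n. last u = m \<or> P x}"
      by (auto simp: insertions_def successively_append_iff)
  next
    fix v assume "v \<in> (\<lambda>u. u @ [m]) ` {u \<in> insertions P m (w @ [x]) n. last u = m \<or> P x}"
    then obtain u where "v = u @ [m]" "u \<in> insertions P m (w @ [x]) n" "last u = m \<or> P x"
      by blast
    with last_eq[of u] show "v \<in> {v \<in> insertions P m (w @ [x]) (Suc n). last v = m}"
      by (auto simp: insertions_def successively_append_iff)
  qed
qed

lemma insertions_snoc_last_eq_empty: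
  assumes "x \<noteq> m" "n = 0 \<or> \<not> P x"
  shows "{v \<in> insertions P m (w @ [x]) n. last v = m} = {}"
  using assms(2)
proof (induction n)
  case 0
  have "m \<in> set v" if "v \<in> insertions P m (w @ [x]) 0" "last v = m" for v
  proof -
    have "v \<noteq> []" using that by (auto simp: insertions_def)
    then show ?thesis using that(2) by auto
  qed
  then show ?case by (auto simp: insertions_def count_mset_0_iff)
next
  case (Suc n)
  then show ?case using insertions_snoc_last_eq[OF assms(1)] by auto
qed

lemma card_insertions:
  assumes "m \<notin> set w"
  shows "card (insertions P m w n) = (length (filter P w) + n) choose n"
  using assms
proof (induction w arbitrary: n rule: rev_induct)
  case Nil
  then show ?case by (simp add: insertions_Nil)
next
  case (snoc x w)
  have "x \<noteq> m" using snoc.prems by auto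
  have split: "card (insertions P m (w @ [x]) n) =
      card (insertions P m w n) + card {v \<in> insertions P m (w @ [x]) n. last v = m}" for n
  proof -
    have "card (insertions P m (w @ [x]) n) =
        card {v \<in> insertions P m (w @ [x]) n. last v \<noteq> m} +
        card {v \<in> insertions P m (w @ [x]) n. last v = m}"
      by (subst card_Un_disjoint[symmetric]) (auto simp: finite_insertions intro: arg_cong[where f = card])
    also have "card {v \<in> insertions P m (w @ [x]) n. last v \<noteq> m} = card (insertions P m w n)"
      by (simp add: insertions_snoc_last_neq[OF \<open>x \<noteq> m\<close>] card_image inj_on_def)
    finally show ?thesis .
  qed
  show ?case
  \<comment> \<open>if P x, splitting on the last letter gives Pascal's rule\<close>
  proof (cases "P x")
    case False
    then have none: "{v \<in> insertions P m (w @ [x]) n. last v = m} = {}"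
      using insertions_snoc_last_eq_empty[OF \<open>x \<noteq> m\<close>] by blast
    show ?thesis using split[of n] snoc.IH[of n] snoc.prems False unfolding none by simp
  next
    case True
    let ?s = "length (filter P w)"
    show ?thesis
    proof (induction n)
      case 0
      have none: "{v \<in> insertions P m (w @ [x]) 0. last v = m} = {}"
        using insertions_snoc_last_eq_empty[OF \<open>x \<noteq> m\<close>] by blast
      show ?case using split[of 0] snoc.IH[of 0] snoc.prems unfolding none by simp
    next
      case (Suc n)
      have "card {v \<in> insertions P m (w @ [x]) (Suc n). last v = m} =
          card (insertions P m (w @ [x]) n)"
        by (simp add: insertions_snoc_last_eq[OF \<open>x \<noteq> m\<close>] True card_image inj_on_def)
      then have "card (insertions P m (w @ [x]) (Suc n)) =
          (?s + Suc n choose Suc n) + (Suc ?s + n choose n)"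
        using split[of "Suc n"] snoc.IH[of "Suc n"] snoc.prems Suc.IH True by simp
      then show ?case using True by simp
    qed
  qed
qed

lemma successively_filter:
  assumes "successively R xs" "set xs \<subseteq> S"
    and bridge: "\<And>a b c. a \<in> S \<Longrightarrow> b \<in> S \<Longrightarrow> c \<in> S \<Longrightarrow> R a b \<Longrightarrow> \<not> Q b \<Longrightarrow> R b c \<Longrightarrow> R a c"
  shows "successively R (filter Q xs)"
proof -
  have head_kept: "successively R (a # filter Q ys)"
    if "successively R (a # ys)" "set (a # ys) \<subseteq> S" for a ys
    using that
  proof (induction ys arbitrary: a)
    case (Cons b ys)
    then have IH: "successively R (b # filter Q ys)" by simp
    show ?case
    proof (cases "Q b")
      case False
      have "R a (hd (filter Q ys))" if "filter Q ys \<noteq> []"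
      proof (rule bridge[of a b])
        show "hd (filter Q ys) \<in> S"
          using hd_in_set[OF that] Cons.prems(2) by auto
        show "R b (hd (filter Q ys))"
          using IH that by (simp add: successively_Cons)
      qed (use Cons.prems False in auto)
      with IH False show ?thesis by (auto simp: successively_Cons)
    qed (use Cons.prems IH in simp)
  qed simp
  from assms(1,2) show ?thesis
  proof (induction xs)
    case (Cons a xs)
    show ?case
    proof (cases "Q a")
      case True
      with Cons.prems head_kept[of a xs] show ?thesis by simp
    next
      case False
      with Cons show ?thesis by (auto simp: successively_Cons)
    qed
  qed simp
qed

lemma mset_eq_filter_neq_plus_replicate:
  "mset v = mset (filter (\<lambda>y. y \<noteq> m) v) + replicate_mset (count (mset v) m) m"
  by (induction v) auto

lemma successively_le_add_iff_filter_max: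
  fixes v :: "nat list"
  assumes "\<forall>y\<in>set v. y \<le> m"
  shows "successively (\<lambda>x y. y \<le> x + k) v \<longleftrightarrow>
    successively (\<lambda>x y. y \<le> x + k) (filter (\<lambda>y. y \<noteq> m) v) \<and>
    successively (\<lambda>a c. c = m \<longrightarrow> a = m \<or> m \<le> a + k) v"
proof
  assume v: "successively (\<lambda>x y. y \<le> x + k) v"
  show "successively (\<lambda>x y. y \<le> x + k) (filter (\<lambda>y. y \<noteq> m) v) \<and>
      successively (\<lambda>a c. c = m \<longrightarrow> a = m \<or> m \<le> a + k) v"
  proof
    show "successively (\<lambda>x y. y \<le> x + k) (filter (\<lambda>y. y \<noteq> m) v)"
      using v assms by (intro successively_filter[where S = "{..m}"]) auto
    show "successively (\<lambda>a c. c = m \<longrightarrow> a = m \<or> m \<le> a + k) v"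
      using v by (rule successively_mono) auto
  qed
next
  assume "successively (\<lambda>x y. y \<le> x + k) (filter (\<lambda>y. y \<noteq> m) v) \<and>
      successively (\<lambda>a c. c = m \<longrightarrow> a = m \<or> m \<le> a + k) v"
  with assms show "successively (\<lambda>x y. y \<le> x + k) v"
  proof (induction v rule: induct_list012)
    case (3 a b zs)
    have "successively (\<lambda>x y. y \<le> x + k) (filter (\<lambda>y. y \<noteq> m) (b # zs))"
      using "3.prems"(2) by (auto simp: successively_Cons split: if_splits)
    then have tail: "successively (\<lambda>x y. y \<le> x + k) (b # zs)"
      using "3.prems" by (intro "3.IH"(2)) auto
    have "b \<le> a + k"
    proof (cases "b = m")
      case False
      then show ?thesis using "3.prems" by (cases "a = m") auto
    qed (use "3.prems" in auto)
    with tail show ?case by simp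
  qed auto
qed

lemma vn_arrangements_conv_successively:
  "vn_arrangements k M = {vs. mset vs = M \<and> successively (\<lambda>x y. y \<le> x + k) vs}"
  unfolding vn_arrangements_def successively_conv_nth by auto

lemma finite_vn_arrangements: "finite (vn_arrangements k M)"
proof (rule finite_subset)
  show "vn_arrangements k M \<subseteq> {v. set v \<subseteq> set_mset M \<and> length v = size M}"
    unfolding vn_arrangements_def by auto
  show "finite {v. set v \<subseteq> set_mset M \<and> length v = size M}"
    by (rule finite_lists_length_eq) simp
qed

lemma vn_arrangements_add_max:
  assumes "\<forall>y\<in>#M. y < m"
  shows "vn_arrangements k (M + replicate_mset n m) =
    (\<Union>w\<in>vn_arrangements k M. insertions (\<lambda>y. m \<le> y + k) m w n)"
proof (intro equalityI subsetI)
  fix v assume "v \<in> vn_arrangements k (M + replicate_mset n m)"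
  then have v: "mset v = M + replicate_mset n m" "successively (\<lambda>x y. y \<le> x + k) v"
    by (auto simp: vn_arrangements_conv_successively)
  have "\<forall>y\<in>set v. y \<le> m"
    using assms by (auto simp flip: set_mset_mset simp: v(1) split: if_splits)
  moreover have "count (mset v) m = n"
    using assms by (auto simp: v(1) count_eq_zero_iff)
  moreover have "mset (filter (\<lambda>y. y \<noteq> m) v) = M"
    using mset_eq_filter_neq_plus_replicate[of v m] calculation(2) by (simp add: v(1))
  ultimately show "v \<in> (\<Union>w\<in>vn_arrangements k M. insertions (\<lambda>y. m \<le> y + k) m w n)"
    using v assms successively_le_add_iff_filter_max[of v m k]
    by (auto simp: vn_arrangements_conv_successively insertions_def simp flip: count_mset)
next
  fix v assume "v \<in> (\<Union>w\<in>vn_arrangements k M. insertions (\<lambda>y. m \<le> y + k) m w n)"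
  then obtain w where "w \<in> vn_arrangements k M" "v \<in> insertions (\<lambda>y. m \<le> y + k) m w n"
    by blast
  then have w: "mset w = M" "successively (\<lambda>x y. y \<le> x + k) w"
    and v: "filter (\<lambda>y. y \<noteq> m) v = w" "count (mset v) m = n"
      "successively (\<lambda>a c. c = m \<longrightarrow> a = m \<or> m \<le> a + k) v"
    by (auto simp: vn_arrangements_conv_successively insertions_def)
  have "mset v = M + replicate_mset n m"
    using mset_eq_filter_neq_plus_replicate[of v m] v w by simp
  moreover have "\<forall>y\<in>set v. y \<le> m"
    using assms calculation by (auto simp flip: set_mset_mset split: if_splits)
  ultimately show "v \<in> vn_arrangements k (M + replicate_mset n m)"
    using v w successively_le_add_iff_filter_max[of v m k]
    by (simp add: vn_arrangements_conv_successively)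
qed

lemma card_vn_arrangements_add_max:
  assumes "\<forall>y\<in>#M. y < m"
  shows "card (vn_arrangements k (M + replicate_mset n m)) =
    card (vn_arrangements k M) * (size (filter_mset (\<lambda>y. m \<le> y + k) M) + n choose n)"
proof -
  have "\<forall>w\<in>vn_arrangements k M. finite (insertions (\<lambda>y. m \<le> y + k) m w n)"
    by (simp add: finite_insertions)
  then have "card (vn_arrangements k (M + replicate_mset n m)) =
      (\<Sum>w\<in>vn_arrangements k M. card (insertions (\<lambda>y. m \<le> y + k) m w n))"
    unfolding vn_arrangements_add_max[OF assms]
    by (rule card_UN_disjoint[OF finite_vn_arrangements]) (auto simp: insertions_def)
  also have "\<dots> = (\<Sum>w\<in>vn_arrangements k M. size (filter_mset (\<lambda>y. m \<le> y + k) M) + n choose n)"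
  proof (rule sum.cong)
    fix w assume "w \<in> vn_arrangements k M"
    then have w: "mset w = M" by (simp add: vn_arrangements_def)
    then have "m \<notin> set w" using assms by (auto simp flip: set_mset_mset)
    moreover have "length (filter (\<lambda>y. m \<le> y + k) w) = size (filter_mset (\<lambda>y. m \<le> y + k) M)"
      by (metis w mset_filter size_mset)
    ultimately show "card (insertions (\<lambda>y. m \<le> y + k) m w n) =
        size (filter_mset (\<lambda>y. m \<le> y + k) M) + n choose n"
      by (simp add: card_insertions)
  qed simp
  finally show ?thesis by simp
qed

lemma vn_multiset_0: "vn_multiset 0 b = replicate_mset (b 0) 0"
  by (simp add: vn_multiset_def)

lemma vn_multiset_Suc:
  "vn_multiset (Suc t) b = vn_multiset t b + replicate_mset (b (Suc t)) (Suc t)"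
  by (simp add: vn_multiset_def sum.atLeast0_atMost_Suc)

lemma vn_multiset_less: "\<forall>y\<in>#vn_multiset t b. y < Suc t"
  by (induction t) (auto simp: vn_multiset_0 vn_multiset_Suc)

lemma size_filter_vn_multiset:
  "size (filter_mset P (vn_multiset t b)) = (\<Sum>i=0..t. if P i then b i else 0)"
proof -
  have replicate: "size (filter_mset P (replicate_mset n x)) = (if P x then n else 0)" for n x
    by (induction n) auto
  show ?thesis
    by (induction t) (simp_all add: vn_multiset_0 vn_multiset_Suc replicate sum.atLeast0_atMost_Suc)
qed

lemma card_vn_arrangements_vn_multiset:
  "card (vn_arrangements k (vn_multiset t b)) = (\<Prod>m=1..t. (\<Sum>j=m-k..m. b j) choose b m)"
proof (induction t)
  case 0
  have "vn_arrangements k {#} = {[]}"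
    by (auto simp: vn_arrangements_def)
  then show ?case
    using card_vn_arrangements_add_max[of "{#}" 0 k "b 0"] by (simp add: vn_multiset_0)
next
  case (Suc t)
  have "{i\<in>{0..t}. Suc t \<le> i + k} = {Suc t - k..t}" by auto
  then have "(\<Sum>i=0..t. if Suc t \<le> i + k then b i else 0) = (\<Sum>j=Suc t-k..t. b j)"
    by (metis (no_types) finite_atLeastAtMost sum.inter_filter)
  moreover have "\<not> Suc t < Suc t - k" by arith
  ultimately have "size (filter_mset (\<lambda>y. Suc t \<le> y + k) (vn_multiset t b)) + b (Suc t) =
      (\<Sum>j=Suc t-k..Suc t. b j)"
    by (simp add: size_filter_vn_multiset)
  then show ?case
    using card_vn_arrangements_add_max[OF vn_multiset_less, where k = k and n = "b (Suc t)"]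
    by (simp add: vn_multiset_Suc Suc.IH)
qed

lemma fact_sum_eq_prod_choose:
  fixes b :: "nat \<Rightarrow> nat"
  shows "fact (\<Sum>i=0..k. b i) = (\<Prod>m=1..k. (\<Sum>j=0..m. b j) choose b m) * (\<Prod>i=0..k. fact (b i))"
proof (induction k)
  case (Suc k)
  let ?S = "\<Sum>i=0..k. b i"
  have "fact (\<Sum>i=0..Suc k. b i) = (fact (?S + b (Suc k)) :: nat)"
    by (simp add: sum.atLeast0_atMost_Suc)
  also have "\<dots> = (?S + b (Suc k) choose b (Suc k)) * fact ?S * fact (b (Suc k))"
    using binomial_fact_lemma[of "b (Suc k)" "?S + b (Suc k)"] by (simp add: mult_ac)
  also have "\<dots> = (\<Prod>m=1..Suc k. (\<Sum>j=0..m. b j) choose b m) * (\<Prod>i=0..Suc k. fact (b i))"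
    unfolding Suc.IH by (simp add: sum.atLeast0_atMost_Suc prod.atLeast0_atMost_Suc mult_ac)
  finally show ?case .
qed simp

lemma multinomial_coeff_eq_prod_choose:
  "multinomial_coeff {0..k} b = (\<Prod>m=1..k. (\<Sum>j=0..m. b j) choose b m)"
proof -
  have "(\<Prod>i=0..k. fact (b i) :: nat) > 0" by (simp add: prod_pos)
  then show ?thesis unfolding multinomial_coeff_def fact_sum_eq_prod_choose by simp
qed

theorem proposition4p3:
  fixes t k :: nat and b :: "nat \<Rightarrow> nat"
  assumes "k \<le> t"
  shows "card (vn_arrangements k (vn_multiset t b)) =
    multinomial_coeff {0..k} b *
    (\<Prod>i\<in>{1..t-k}. (\<Sum>j\<in>{i..i+k}. b j) choose b (i+k))"
proof -
  let ?f = "\<lambda>m. (\<Sum>j=m-k..m. b j) choose b m"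
  have "card (vn_arrangements k (vn_multiset t b)) = prod ?f {1..k + (t - k)}"
    using assms by (simp add: card_vn_arrangements_vn_multiset)
  also have "\<dots> = prod ?f {1..k} * prod ?f {k + 1..k + (t - k)}"
    by (rule prod.ub_add_nat) simp
  also have "prod ?f {1..k} = multinomial_coeff {0..k} b"
    unfolding multinomial_coeff_eq_prod_choose by (rule prod.cong) auto
  also have "prod ?f {k + 1..k + (t - k)} = (\<Prod>i=1..t-k. (\<Sum>j=i..i+k. b j) choose b (i+k))"
    using prod.shift_bounds_cl_nat_ivl[of ?f 1 k "t - k"] by (simp add: add.commute)
  finally show ?thesis .
qed

end
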